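(* Let $U$, $s$ and $r$ be as follows: $n\ge3$, $s$ an $n$-bit string with $s_1=0,s_2=1$, $U$ an $n$-qubit unitary with $U|0^n\rangle=|0^n\rangle$ preserving the span $\mathcal S$ of basis states $|y\rangle$ with $y$ a Fibonacci string with $y_1=0,y_2=1$, and $|s\rangle\in\mathcal S$; $r\in\{-1,0,1\}$ is the output of the control-free echo-verification circuit described in the context. Let $r'=(-1)^x$ where $x$ is the outcome of measuring the ancilla in the vanilla Hadamard test: an ancilla in $|0\rangle$ and a register in $|s\rangle$, apply $H$ to the ancilla, apply controlled-$U$ (controlled on the ancilla), apply $H$ to the ancilla, measure the ancilla. Then $\mathbb E[r']=\mathrm{Re}\langle s|U|s\rangle$, $\mathrm{Var}(r')=1-(\mathrm{Re}\langle s|U|s\rangle)^2$, and $$\mathrm{Var}(r)=\mathrm{Var}(r')-\frac{1-|\langle s|U|s\rangle|^2}{2}\le \mathrm{Var}(r'),$$ with equality if and only if $|\langle s|U|s\rangle|=1$.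
   Context: A Fibonacci string is a bit string with no two consecutive zeros. The control-free echo-verification circuit: let $V$ be the $n$-qubit unitary with $V|0x_2\cdots x_n\rangle=|x_2 0 x_3\cdots x_n\rangle$ and $V|1x_2\cdots x_n\rangle=|x_2 1 (x_3\oplus s_3)\cdots(x_n\oplus s_n)\rangle$; starting from $|0^n\rangle$ apply $H$ on qubit 1, then $V$, $U$, $V^\dagger$, $H$ on qubit 1, and measure all qubits obtaining $x_1,\dots,x_n$; set $r=(-1)^{x_1}$ if $x_2=\cdots=x_n=0$ and $r=0$ otherwise. *)

theory Defs
  imports Complex_Main
begin

text \<open>Computational basis states of m qubits are bit strings, represented as
  bool lists of length m (True = 1); qubit 1 is the head of the list.
  A state is an amplitude function on bit strings; an operator M is given
  by its matrix entries M y x = <y|M|x>.\<close>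

definition bstr :: "nat \<Rightarrow> bool list set" where
  "bstr m = {xs. length xs = m}"

definition ket :: "bool list \<Rightarrow> bool list \<Rightarrow> complex" where
  "ket x = (\<lambda>y. if y = x then 1 else 0)"

definition app :: "nat \<Rightarrow> (bool list \<Rightarrow> bool list \<Rightarrow> complex) \<Rightarrow> (bool list \<Rightarrow> complex)
                   \<Rightarrow> (bool list \<Rightarrow> complex)" where
  "app m M \<psi> = (\<lambda>y. \<Sum>x\<in>bstr m. M y x * \<psi> x)"

definition adj :: "(bool list \<Rightarrow> bool list \<Rightarrow> complex) \<Rightarrow> (bool list \<Rightarrow> bool list \<Rightarrow> complex)" where
  "adj M = (\<lambda>y x. cnj (M x y))"

definition unitary_op :: "nat \<Rightarrow> (bool list \<Rightarrow> bool list \<Rightarrow> complex) \<Rightarrow> bool" where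
  "unitary_op m M \<longleftrightarrow>
     (\<forall>x\<in>bstr m. \<forall>x'\<in>bstr m. (\<Sum>y\<in>bstr m. cnj (M y x) * M y x') = (if x = x' then 1 else 0))"

definition H1 :: "bool list \<Rightarrow> bool list \<Rightarrow> complex" where
  "H1 y x = (if tl y = tl x then (if hd y \<and> hd x then - 1 else 1) / complex_of_real (sqrt 2) else 0)"

definition perm_op :: "(bool list \<Rightarrow> bool list) \<Rightarrow> bool list \<Rightarrow> bool list \<Rightarrow> complex" where
  "perm_op f y x = (if y = f x then 1 else 0)"

definition fib_string :: "bool list \<Rightarrow> bool" where
  "fib_string y \<longleftrightarrow> (\<forall>i. i + 1 < length y \<longrightarrow> y ! i \<or> y ! (i + 1))"

definition fib01 :: "nat \<Rightarrow> bool list set" where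
  "fib01 n = {y \<in> bstr n. fib_string y \<and> \<not> y ! 0 \<and> y ! 1}"

definition preserves_span :: "nat \<Rightarrow> (bool list \<Rightarrow> bool list \<Rightarrow> complex) \<Rightarrow> bool list set \<Rightarrow> bool" where
  "preserves_span n U A \<longleftrightarrow> (\<forall>x\<in>A. \<forall>y\<in>bstr n. y \<notin> A \<longrightarrow> U y x = 0)"

text \<open>The map underlying V:
  V|0 x2 x3..xn> = |x2 0 x3..xn>,  V|1 x2 x3..xn> = |x2 1 (x3+s3)..(xn+sn)>.\<close>
definition Vmap :: "bool list \<Rightarrow> bool list \<Rightarrow> bool list" where
  "Vmap s x = (case x of
      a # b # rest \<Rightarrow> (if a then b # True # map2 (\<noteq>) rest (drop 2 s)
                       else b # False # rest)
    | _ \<Rightarrow> x)"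

definition echo_state :: "nat \<Rightarrow> bool list \<Rightarrow> (bool list \<Rightarrow> bool list \<Rightarrow> complex) \<Rightarrow> bool list \<Rightarrow> complex" where
  "echo_state n s U =
     app n H1 (app n (adj (perm_op (Vmap s))) (app n U (app n (perm_op (Vmap s))
       (app n H1 (ket (replicate n False))))))"

definition echo_prob :: "nat \<Rightarrow> bool list \<Rightarrow> (bool list \<Rightarrow> bool list \<Rightarrow> complex) \<Rightarrow> bool list \<Rightarrow> real" where
  "echo_prob n s U x = (cmod (echo_state n s U x))\<^sup>2"

definition r_val :: "bool list \<Rightarrow> real" where
  "r_val x = (if (\<forall>i\<in>{1..<length x}. \<not> x ! i) then (if x ! 0 then - 1 else 1) else 0)"

definition E_r :: "nat \<Rightarrow> bool list \<Rightarrow> (bool list \<Rightarrow> bool list \<Rightarrow> complex) \<Rightarrow> real" where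
  "E_r n s U = (\<Sum>x\<in>bstr n. echo_prob n s U x * r_val x)"

definition Var_r :: "nat \<Rightarrow> bool list \<Rightarrow> (bool list \<Rightarrow> bool list \<Rightarrow> complex) \<Rightarrow> real" where
  "Var_r n s U = (\<Sum>x\<in>bstr n. echo_prob n s U x * (r_val x)\<^sup>2) - (E_r n s U)\<^sup>2"

text \<open>Vanilla Hadamard test on n+1 qubits, ancilla = qubit 1 (head).\<close>
definition ctrl_op :: "(bool list \<Rightarrow> bool list \<Rightarrow> complex) \<Rightarrow> bool list \<Rightarrow> bool list \<Rightarrow> complex" where
  "ctrl_op U y x = (if hd y = hd x then (if hd x then U (tl y) (tl x) else (if tl y = tl x then 1 else 0)) else 0)"

definition had_state :: "nat \<Rightarrow> bool list \<Rightarrow> (bool list \<Rightarrow> bool list \<Rightarrow> complex) \<Rightarrow> bool list \<Rightarrow> complex" where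
  "had_state n s U = app (n + 1) H1 (app (n + 1) (ctrl_op U) (app (n + 1) H1 (ket (False # s))))"

definition had_prob :: "nat \<Rightarrow> bool list \<Rightarrow> (bool list \<Rightarrow> bool list \<Rightarrow> complex) \<Rightarrow> bool \<Rightarrow> real" where
  "had_prob n s U a = (\<Sum>y\<in>{y \<in> bstr (n + 1). hd y = a}. (cmod (had_state n s U y))\<^sup>2)"

definition r'_val :: "bool \<Rightarrow> real" where
  "r'_val a = (if a then - 1 else 1)"

definition E_r' :: "nat \<Rightarrow> bool list \<Rightarrow> (bool list \<Rightarrow> bool list \<Rightarrow> complex) \<Rightarrow> real" where
  "E_r' n s U = (\<Sum>a\<in>(UNIV::bool set). had_prob n s U a * r'_val a)"

definition Var_r' :: "nat \<Rightarrow> bool list \<Rightarrow> (bool list \<Rightarrow> bool list \<Rightarrow> complex) \<Rightarrow> real" where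
  "Var_r' n s U = (\<Sum>a\<in>(UNIV::bool set). had_prob n s U a * (r'_val a)\<^sup>2) - (E_r' n s U)\<^sup>2"

end

theory Submission
  imports Defs
begin

text \<open>The Hadamard on qubit 1 turns |0^n> into (|0^n> + |10^(n-1)>)/sqrt 2, and V fixes |0^n>
  while mapping |10^(n-1)> to |s>. As U fixes |0^n> and preserves the span S, which does not
  contain |0^n>, the entries <0^n|U|s> and <s|U|0^n> vanish; so after V^dagger and the final
  Hadamard the amplitudes of |0^n> and |10^(n-1)>, the only outcomes with r \<noteq> 0, are
  (1 \<plusminus> u)/2 with u = <s|U|s>. Hence E r = Re u and E r^2 = (1 + |u|^2)/2. In the Hadamard
  test, unitarity of U (the column of s has norm 1) gives the outcome probabilities
  (1 \<plusminus> Re u)/2.\<close>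

lemma finite_bstr: "finite (bstr m)"
proof -
  have "bstr m = {xs. set xs \<subseteq> UNIV \<and> length xs = m}"
    by (auto simp: bstr_def)
  then show ?thesis
    using finite_lists_length_eq[of "UNIV :: bool set" m] by simp
qed

lemma Cons_in_bstr_Suc_iff [simp]: "x # xs \<in> bstr (Suc m) \<longleftrightarrow> xs \<in> bstr m"
  by (simp add: bstr_def)

lemma bstr_SucE:
  assumes "x \<in> bstr (Suc m)"
  obtains b xs where "x = b # xs" and "xs \<in> bstr m"
  using assms by (cases x) (auto simp: bstr_def)

lemma app_eq_sum_subset:
  assumes "A \<subseteq> bstr m" and "\<And>x. x \<in> bstr m \<Longrightarrow> x \<notin> A \<Longrightarrow> M y x * \<psi> x = 0"
  shows "app m M \<psi> y = (\<Sum>x\<in>A. M y x * \<psi> x)"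
  unfolding app_def by (rule sum.mono_neutral_right) (use assms finite_bstr in auto)

lemma app_H1:
  assumes "x \<in> bstr (Suc m)"
  shows "app (Suc m) H1 \<psi> x =
    (\<psi> (False # tl x) + (if hd x then - 1 else 1) * \<psi> (True # tl x)) / complex_of_real (sqrt 2)"
proof -
  have "app (Suc m) H1 \<psi> x = (\<Sum>z\<in>{False # tl x, True # tl x}. H1 x z * \<psi> z)"
  proof (rule app_eq_sum_subset)
    fix z assume "z \<in> bstr (Suc m)" and "z \<notin> {False # tl x, True # tl x}"
    then show "H1 x z * \<psi> z = 0"
      by (elim bstr_SucE) (auto simp: H1_def)
  qed (use assms in \<open>auto elim: bstr_SucE\<close>)
  then show ?thesis
    by (simp add: H1_def add_divide_distrib)
qed

lemma app_adj_perm_op: "f x \<in> bstr m \<Longrightarrow> app m (adj (perm_op f)) \<chi> x = \<chi> (f x)"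
  by (subst app_eq_sum_subset[where A = "{f x}"]) (auto simp: adj_def perm_op_def)

lemma of_real_sqrt2_mult_self: "complex_of_real (sqrt 2) * complex_of_real (sqrt 2) = 2"
  by (simp flip: of_real_mult)

lemma cmod_one_plus_square: "(cmod (1 + u))\<^sup>2 = 1 + 2 * Re u + (cmod u)\<^sup>2"
  and cmod_one_minus_square: "(cmod (1 - u))\<^sup>2 = 1 - 2 * Re u + (cmod u)\<^sup>2"
  unfolding cmod_power2 by (simp_all add: power2_eq_square algebra_simps)

lemma map2_xor_replicate_False: "map2 (\<noteq>) (replicate (length xs) False) xs = xs"
  by (induction xs) auto

lemma Vmap_replicate_False: "Vmap s (replicate n False) = replicate n False"
  by (cases n; cases "n - 1") (auto simp: Vmap_def)

lemma Vmap_True_replicate_False: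
  "Vmap (False # True # t) (True # replicate (Suc (length t)) False) = False # True # t"
  using map2_xor_replicate_False[of t] by (simp add: Vmap_def)

lemma prefix_False_TrueE:
  assumes "length s = n" and "2 \<le> n" and "\<not> s ! 0" and "s ! 1"
  obtains t where "s = False # True # t" and "n = Suc (Suc (length t))"
proof -
  obtain a b t where "s = a # b # t"
    using assms(1,2) by (cases s; cases "tl s") auto
  with assms that show thesis by auto
qed

lemma echo_prepared_state:
  assumes "length s = n" and "2 \<le> n" and "\<not> s ! 0" and "s ! 1"
  defines "z \<equiv> replicate n False"
  shows "app n (perm_op (Vmap s)) (app n H1 (ket z)) y = (ket z y + ket s y) / complex_of_real (sqrt 2)"
proof -
  obtain t where s: "s = False # True # t" and n: "n = Suc (Suc (length t))"
    using prefix_False_TrueE[OF assms(1-4)] .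
  define e where "e = True # replicate (Suc (length t)) False"
  have z: "z = False # replicate (Suc (length t)) False"
    by (simp add: z_def n)
  have H1_ket: "app n H1 (ket z) x =
      (if tl x = replicate (Suc (length t)) False then 1 else 0) / complex_of_real (sqrt 2)"
    if "x \<in> bstr n" for x
    using app_H1[OF that[unfolded n]] by (auto simp: n ket_def z)
  have "app n (perm_op (Vmap s)) (app n H1 (ket z)) y =
      (\<Sum>x\<in>{z, e}. perm_op (Vmap s) y x * app n H1 (ket z) x)"
  proof (rule app_eq_sum_subset)
    fix x assume x: "x \<in> bstr n" "x \<notin> {z, e}"
    then have "tl x \<noteq> replicate (Suc (length t)) False"
      by (cases x) (auto simp: z e_def)
    then show "perm_op (Vmap s) y x * app n H1 (ket z) x = 0"
      using H1_ket[OF x(1)] by simp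
  qed (auto simp: n z e_def bstr_def)
  also have "\<dots> = (ket z y + ket s y) / complex_of_real (sqrt 2)"
    using H1_ket[of z] H1_ket[of e] Vmap_True_replicate_False[of t] Vmap_replicate_False[of s n]
    by (auto simp: n z e_def s bstr_def perm_op_def ket_def add_divide_distrib)
  finally show ?thesis .
qed

lemma echo_state_amplitudes:
  assumes "length s = n" and "2 \<le> n" and "\<not> s ! 0" and "s ! 1"
  defines "z \<equiv> replicate n False" and "e \<equiv> True # replicate (n - 1) False"
  shows "echo_state n s U z = (U z z + U z s + U s z + U s s) / 2"
    and "echo_state n s U e = (U z z + U z s - U s z - U s s) / 2"
proof -
  obtain t where s: "s = False # True # t" and n: "n = Suc (Suc (length t))"
    using prefix_False_TrueE[OF assms(1-4)] .
  have z: "z = False # replicate (Suc (length t)) False"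
    by (simp add: z_def n)
  have zs: "z \<noteq> s"
    by (simp add: z s)
  have bstr: "z \<in> bstr n" "e \<in> bstr n" "s \<in> bstr n"
    by (simp_all add: bstr_def n z e_def s)
  have prep: "app n (perm_op (Vmap s)) (app n H1 (ket z)) y =
      ((if y = z then 1 else 0) + (if y = s then 1 else 0)) / complex_of_real (sqrt 2)" for y
    using echo_prepared_state[OF assms(1-4)] by (simp add: z_def ket_def)
  define \<chi> where "\<chi> = app n U (app n (perm_op (Vmap s)) (app n H1 (ket z)))"
  have \<chi>: "\<chi> y = (U y z + U y s) / complex_of_real (sqrt 2)" for y
  proof -
    have "\<chi> y = (\<Sum>x\<in>{z, s}. U y x * app n (perm_op (Vmap s)) (app n H1 (ket z)) x)"
      unfolding \<chi>_def by (rule app_eq_sum_subset) (use bstr in \<open>auto simp: prep\<close>)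
    then show ?thesis
      using zs by (simp add: prep add_divide_distrib)
  qed
  define \<omega> where "\<omega> = app n (adj (perm_op (Vmap s))) \<chi>"
  have \<omega>: "\<omega> z = \<chi> z" "\<omega> e = \<chi> s"
    using app_adj_perm_op[of "Vmap s" z n \<chi>] app_adj_perm_op[of "Vmap s" e n \<chi>] bstr
      Vmap_replicate_False[of s n] Vmap_True_replicate_False[of t]
    by (simp_all add: \<omega>_def z_def e_def s n)
  have echo: "echo_state n s U = app n H1 \<omega>"
    by (simp add: echo_state_def \<omega>_def \<chi>_def z_def)
  have ze: "hd z = False" "hd e = True" "False # tl z = z" "True # tl z = e" "tl e = tl z"
    by (simp_all add: z e_def n)
  have H1z: "app n H1 \<omega> z = (\<omega> z + \<omega> e) / complex_of_real (sqrt 2)"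
    using app_H1[of z "Suc (length t)" \<omega>, folded n] bstr(1) by (simp add: ze)
  have H1e: "app n H1 \<omega> e = (\<omega> z - \<omega> e) / complex_of_real (sqrt 2)"
    using app_H1[of e "Suc (length t)" \<omega>, folded n] bstr(2) by (simp add: ze)
  show "echo_state n s U z = (U z z + U z s + U s z + U s s) / 2"
    unfolding echo H1z \<omega> \<chi> by (simp add: add_divide_distrib of_real_sqrt2_mult_self)
  show "echo_state n s U e = (U z z + U z s - U s z - U s s) / 2"
    unfolding echo H1e \<omega> \<chi> by (simp add: add_divide_distrib diff_divide_distrib of_real_sqrt2_mult_self)
qed

lemma r_val_False_replicate: "r_val (False # replicate m False) = 1"
  by (auto simp: r_val_def nth_Cons')

lemma r_val_True_replicate: "r_val (True # replicate m False) = - 1"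
  by (auto simp: r_val_def nth_Cons')

lemma r_val_eq_0:
  assumes "x \<in> bstr n" and "x \<noteq> replicate n False" and "x \<noteq> True # replicate (n - 1) False"
  shows "r_val x = 0"
proof (rule ccontr)
  assume "r_val x \<noteq> 0"
  then have zero: "\<not> x ! i" if "1 \<le> i" "i < length x" for i
    using that by (auto simp: r_val_def split: if_splits)
  show False
  proof (cases x)
    case Nil
    then show False using assms(1,2) by (simp add: bstr_def)
  next
    case (Cons b xs)
    have "xs = replicate (n - 1) False"
      using assms(1) zero[of "Suc _"] by (auto simp: Cons bstr_def intro: nth_equalityI)
    then show False using assms(1-3) by (cases b) (auto simp: Cons bstr_def simp flip: replicate_Suc)
  qed
qed

lemma Var_r_eq:
  assumes "length s = n" and "2 \<le> n" and "\<not> s ! 0" and "s ! 1"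
  defines "z \<equiv> replicate n False"
  assumes "U z z = 1" and "U z s = 0" and "U s z = 0"
  shows "Var_r n s U = (1 + (cmod (U s s))\<^sup>2) / 2 - (Re (U s s))\<^sup>2"
proof -
  define e where "e = True # replicate (n - 1) False"
  define p where "p = echo_prob n s U"
  have z: "z = False # replicate (n - 1) False"
    using assms(2) by (simp add: z_def flip: replicate_Suc)
  have ze: "z \<in> bstr n" "e \<in> bstr n" "z \<noteq> e"
    using assms(2) by (auto simp: z e_def bstr_def)
  have sum_r: "(\<Sum>x\<in>bstr n. p x * g (r_val x)) = p z * g 1 + p e * g (- 1)" if "g 0 = 0" for g
  proof -
    have "(\<Sum>x\<in>bstr n. p x * g (r_val x)) = (\<Sum>x\<in>{z, e}. p x * g (r_val x))"
      by (rule sum.mono_neutral_right) (use ze that in \<open>auto simp: finite_bstr r_val_eq_0 z_def e_def\<close>)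
    then show ?thesis
      using ze by (simp add: z e_def r_val_False_replicate r_val_True_replicate)
  qed
  have amp: "echo_state n s U z = (1 + U s s) / 2" "echo_state n s U e = (1 - U s s) / 2"
    using echo_state_amplitudes[OF assms(1-4), of U] assms(6-8) by (simp_all add: z_def e_def)
  have "p z = (cmod (1 + U s s))\<^sup>2 / 4" "p e = (cmod (1 - U s s))\<^sup>2 / 4"
    unfolding p_def echo_prob_def amp by (simp_all add: norm_divide power_divide)
  then have pz: "p z = (1 + 2 * Re (U s s) + (cmod (U s s))\<^sup>2) / 4"
    and pe: "p e = (1 - 2 * Re (U s s) + (cmod (U s s))\<^sup>2) / 4"
    by (simp_all add: cmod_one_plus_square cmod_one_minus_square)
  have "E_r n s U = Re (U s s)"
    using sum_r[of "\<lambda>r. r"] by (simp add: E_r_def flip: p_def) (simp add: pz pe field_simps)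
  moreover have "(\<Sum>x\<in>bstr n. echo_prob n s U x * (r_val x)\<^sup>2) = (1 + (cmod (U s s))\<^sup>2) / 2"
    using sum_r[of power2] by (simp flip: p_def) (simp add: pz pe field_simps)
  ultimately show ?thesis
    by (simp add: Var_r_def)
qed

lemma had_state_Cons:
  assumes "length s = n" and "y \<in> bstr n"
  shows "had_state n s U (a # y) = ((if y = s then 1 else 0) + (if a then - 1 else 1) * U y s) / 2"
proof -
  define \<psi> where "\<psi> = app (Suc n) H1 (ket (False # s))"
  have \<psi>: "\<psi> x = (if tl x = s then 1 else 0) / complex_of_real (sqrt 2)" if "x \<in> bstr (Suc n)" for x
    using app_H1[OF that, of "ket (False # s)"] by (auto simp: \<psi>_def ket_def)
  define \<xi> where "\<xi> = app (Suc n) (ctrl_op U) \<psi>"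
  have \<xi>: "\<xi> (b # y) = (if b then U y s else if y = s then 1 else 0) / complex_of_real (sqrt 2)" for b y
  proof -
    have "\<xi> (b # y) = (\<Sum>x\<in>{False # s, True # s}. ctrl_op U (b # y) x * \<psi> x)"
      unfolding \<xi>_def
    proof (rule app_eq_sum_subset)
      fix x assume "x \<in> bstr (Suc n)" and "x \<notin> {False # s, True # s}"
      then show "ctrl_op U (b # y) x * \<psi> x = 0"
        by (elim bstr_SucE) (auto simp: \<psi>)
    qed (use assms(1) in \<open>auto simp: bstr_def\<close>)
    then show ?thesis
      using assms(1) by (simp add: \<psi> bstr_def ctrl_op_def)
  qed
  have "had_state n s U (a # y) = app (Suc n) H1 \<xi> (a # y)"
    by (simp add: had_state_def \<xi>_def \<psi>_def)
  also have "\<dots> = (\<xi> (False # y) + (if a then - 1 else 1) * \<xi> (True # y)) / complex_of_real (sqrt 2)"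
    using app_H1[of "a # y" n \<xi>] assms(2) by simp
  also have "\<dots> = ((if y = s then 1 else 0) + (if a then - 1 else 1) * U y s) / 2"
    by (simp add: \<xi> add_divide_distrib of_real_sqrt2_mult_self)
  finally show ?thesis .
qed

lemma unitary_op_column_norm:
  assumes "unitary_op n U" and "x \<in> bstr n"
  shows "(\<Sum>y\<in>bstr n. (cmod (U y x))\<^sup>2) = 1"
proof -
  have "complex_of_real (\<Sum>y\<in>bstr n. (cmod (U y x))\<^sup>2) = (\<Sum>y\<in>bstr n. cnj (U y x) * U y x)"
    unfolding of_real_sum complex_norm_square by (simp add: mult.commute)
  also have "\<dots> = 1"
    using assms by (simp add: unitary_op_def)
  finally show ?thesis
    using of_real_eq_1_iff by blast
qed

lemma unitary_op_norm_entry_square_le_1: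
  assumes "unitary_op n U" and "x \<in> bstr n" and "y \<in> bstr n"
  shows "(cmod (U y x))\<^sup>2 \<le> 1"
proof -
  have "(cmod (U y x))\<^sup>2 \<le> (\<Sum>y\<in>bstr n. (cmod (U y x))\<^sup>2)"
    by (rule member_le_sum) (use assms(3) finite_bstr in auto)
  then show ?thesis
    using unitary_op_column_norm[OF assms(1,2)] by simp
qed

lemma had_prob_eq:
  assumes "unitary_op n U" and "length s = n"
  shows "had_prob n s U a = (1 + r'_val a * Re (U s s)) / 2"
proof -
  have s: "s \<in> bstr n"
    using assms(2) by (simp add: bstr_def)
  have "{y \<in> bstr (n + 1). hd y = a} = (Cons a) ` bstr n"
    by (auto simp: image_iff elim: bstr_SucE)
  then have "had_prob n s U a = (\<Sum>y\<in>bstr n. (cmod (had_state n s U (a # y)))\<^sup>2)"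
    by (simp add: had_prob_def sum.reindex)
  also have "\<dots> = (\<Sum>y\<in>bstr n. ((cmod (U y s))\<^sup>2 + (if y = s then 1 + 2 * r'_val a * Re (U s s) else 0)) / 4)"
  proof (rule sum.cong)
    fix y assume "y \<in> bstr n"
    then show "(cmod (had_state n s U (a # y)))\<^sup>2 =
        ((cmod (U y s))\<^sup>2 + (if y = s then 1 + 2 * r'_val a * Re (U s s) else 0)) / 4"
      by (cases a) (auto simp: had_state_Cons assms(2) norm_divide power_divide r'_val_def
          cmod_one_plus_square cmod_one_minus_square norm_minus_cancel)
  qed simp
  also have "\<dots> = (1 + r'_val a * Re (U s s)) / 2"
    using unitary_op_column_norm[OF assms(1) s] s
    by (simp add: sum.distrib finite_bstr flip: sum_divide_distrib)
  finally show ?thesis .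
qed

lemma E_r'_eq: "unitary_op n U \<Longrightarrow> length s = n \<Longrightarrow> E_r' n s U = Re (U s s)"
  by (simp add: E_r'_def had_prob_eq UNIV_bool r'_val_def field_simps)

lemma Var_r'_eq: "unitary_op n U \<Longrightarrow> length s = n \<Longrightarrow> Var_r' n s U = 1 - (Re (U s s))\<^sup>2"
  by (simp add: Var_r'_def E_r'_eq had_prob_eq UNIV_bool r'_val_def field_simps)

theorem mainTheorem5:
  fixes n :: nat and s :: "bool list" and U :: "bool list \<Rightarrow> bool list \<Rightarrow> complex"
  assumes "n \<ge> 3"
    and "length s = n" and "\<not> s ! 0" and "s ! 1"
    and "unitary_op n U"
    and "\<forall>y\<in>bstr n. U y (replicate n False) = (if y = replicate n False then 1 else 0)"
    and "preserves_span n U (fib01 n)"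
    and "s \<in> fib01 n"
  shows "E_r' n s U = Re (U s s)
       \<and> Var_r' n s U = 1 - (Re (U s s))\<^sup>2
       \<and> Var_r n s U = Var_r' n s U - (1 - (cmod (U s s))\<^sup>2) / 2
       \<and> Var_r n s U \<le> Var_r' n s U
       \<and> (Var_r n s U = Var_r' n s U \<longleftrightarrow> cmod (U s s) = 1)"
proof -
  let ?z = "replicate n False"
  have s: "s \<in> bstr n" and z: "?z \<in> bstr n"
    using assms(2) by (simp_all add: bstr_def)
  have "s \<noteq> ?z"
    using assms(1,4) by auto
  with s z have Uzz: "U ?z ?z = 1" and Usz: "U s ?z = 0"
    using assms(6) by auto
  have "?z \<notin> fib01 n"
    using assms(1) by (simp add: fib01_def)
  with z have Uzs: "U ?z s = 0"
    using assms(7,8) by (simp add: preserves_span_def)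
  have "Var_r n s U = (1 + (cmod (U s s))\<^sup>2) / 2 - (Re (U s s))\<^sup>2"
    using Var_r_eq[OF assms(2) _ assms(3,4) Uzz Uzs Usz] assms(1) by simp
  then show ?thesis
    using E_r'_eq[OF assms(5,2)] Var_r'_eq[OF assms(5,2)]
      unitary_op_norm_entry_square_le_1[OF assms(5) s s] abs_square_eq_1[of "cmod (U s s)"]
    by (auto simp: field_simps)
qed

end
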